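(* Let $G$ be a graph, let $v$ be a leaf (vertex of degree $1$) of $G$, and let $N(v)=\{w\}$. Then $$\phi(G)\le \sum_{u\in N(w)\setminus\{v\}}\phi\big(G-(N[w]\cup N[u])\big)+\phi(G-v-w)+\phi(G-N[w]).$$
   Context: Graphs are finite and simple. $N(v)$ is the neighborhood of $v$, $N[v]=N(v)\cup\{v\}$, and $G-S$ is the subgraph induced by $V(G)\setminus S$. A subset $F$ of vertices is a dissociation set if $G[F]$ has maximum degree at most $1$; a maximal dissociation set is one not properly contained in another dissociation set; $\phi(G)$ is the number of maximal dissociation sets of $G$, with $\phi=1$ for the graph with no vertices. *)

theory Defs
  imports Main
begin

text \<open>Induced subgraphs G - S are represented
  by the vertex set V - S with the same (restricted) edge relation.\<close>

definition simple_graph :: "'a set \<Rightarrow> ('a \<Rightarrow> 'a \<Rightarrow> bool) \<Rightarrow> bool" where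
  "simple_graph V E \<longleftrightarrow> finite V \<and> (\<forall>x\<in>V. \<forall>y\<in>V. E x y \<longrightarrow> E y x) \<and> (\<forall>x\<in>V. \<not> E x x)"

definition nbhd :: "'a set \<Rightarrow> ('a \<Rightarrow> 'a \<Rightarrow> bool) \<Rightarrow> 'a \<Rightarrow> 'a set" where
  "nbhd V E v = {u \<in> V. E v u}"

definition cnbhd :: "'a set \<Rightarrow> ('a \<Rightarrow> 'a \<Rightarrow> bool) \<Rightarrow> 'a \<Rightarrow> 'a set" where
  "cnbhd V E v = insert v (nbhd V E v)"

definition dissociation_set :: "'a set \<Rightarrow> ('a \<Rightarrow> 'a \<Rightarrow> bool) \<Rightarrow> 'a set \<Rightarrow> bool" where
  "dissociation_set V E F \<longleftrightarrow> F \<subseteq> V \<and> (\<forall>x\<in>F. card (nbhd F E x) \<le> 1)"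

definition maximal_dissociation_set :: "'a set \<Rightarrow> ('a \<Rightarrow> 'a \<Rightarrow> bool) \<Rightarrow> 'a set \<Rightarrow> bool" where
  "maximal_dissociation_set V E F \<longleftrightarrow> dissociation_set V E F \<and>
     (\<forall>F'. dissociation_set V E F' \<and> F \<subseteq> F' \<longrightarrow> F' = F)"

text \<open>Number of maximal dissociation sets of G[V]; for V = {} this is 1 (only the empty set).\<close>
definition phi :: "'a set \<Rightarrow> ('a \<Rightarrow> 'a \<Rightarrow> bool) \<Rightarrow> nat" where
  "phi V E = card {F. maximal_dissociation_set V E F}"

end

theory Submission
  imports Defs
begin

text \<open>Split the maximal dissociation sets F of G according to how they meet the leaf v and
  its neighbour w. If v \<notin> F, maximality forces w \<in> F together with a partner u \<in> N(w) - {v}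
  (otherwise v could be added); if v \<in> F, then either w \<in> F or w \<notin> F. In each class, the
  vertices D of F among v, w, u have no further neighbours in F, so F - D is a maximal
  dissociation set of G - N[D], which is G - (N[w] \<union> N[u]), G - N[w] or G - v - w
  respectively; as F \<mapsto> F - D is injective, each class is counted by the corresponding term.\<close>

lemma simple_graphD:
  assumes "simple_graph V E"
  shows "finite V" and "x \<in> V \<Longrightarrow> y \<in> V \<Longrightarrow> E x y \<Longrightarrow> E y x" and "x \<in> V \<Longrightarrow> \<not> E x x"
  using assms unfolding simple_graph_def by auto

lemma finite_maximal_dissociation_sets:
  assumes "finite V"
  shows "finite {F. maximal_dissociation_set V E F}"
  by (rule finite_subset[of _ "Pow V"])
    (use assms in \<open>auto simp: maximal_dissociation_set_def dissociation_set_def\<close>)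

lemma dissociation_set_subset:
  assumes "finite V" "dissociation_set V E F" "H \<subseteq> F"
  shows "dissociation_set V E H"
proof -
  have "card (nbhd H E x) \<le> 1" if "x \<in> H" for x
  proof -
    have "finite (nbhd F E x)"
      using assms finite_subset unfolding dissociation_set_def nbhd_def by fastforce
    moreover have "nbhd H E x \<subseteq> nbhd F E x" using assms(3) unfolding nbhd_def by auto
    ultimately have "card (nbhd H E x) \<le> card (nbhd F E x)" by (rule card_mono)
    thus ?thesis using assms that unfolding dissociation_set_def by fastforce
  qed
  thus ?thesis using assms unfolding dissociation_set_def by auto
qed

lemma dissociation_set_pair:
  assumes "simple_graph V E" "a \<in> V" "b \<in> V"
  shows "dissociation_set V E {a, b}"
proof -
  have "nbhd {a, b} E x \<subseteq> {a, b} - {x}" if "x \<in> {a, b}" for x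
    using that simple_graphD(3)[OF assms(1)] assms(2,3) unfolding nbhd_def by auto
  moreover have "card ({a, b} - {x}) \<le> 1" if "x \<in> {a, b}" for x
    using that by (cases "a = b") auto
  ultimately have "card (nbhd {a, b} E x) \<le> 1" if "x \<in> {a, b}" for x
    using that card_mono[of "{a, b} - {x}"]
    by (meson finite.emptyI finite.insertI finite_Diff le_trans)
  thus ?thesis using assms unfolding dissociation_set_def by auto
qed

lemma dissociation_set_Un:
  assumes G: "simple_graph V E"
    and "dissociation_set V E A" "dissociation_set V E D"
    and no_edge: "\<forall>a\<in>A. \<forall>d\<in>D. \<not> E a d"
  shows "dissociation_set V E (A \<union> D)"
proof -
  have AV: "A \<subseteq> V" and DV: "D \<subseteq> V" using assms unfolding dissociation_set_def by auto
  have nbhd_Un: "nbhd (A \<union> D) E x = nbhd A E x \<union> nbhd D E x" for x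
    unfolding nbhd_def by auto
  have "nbhd D E x = {}" if "x \<in> A" for x
    using that no_edge unfolding nbhd_def by auto
  moreover have "nbhd A E x = {}" if "x \<in> D" for x
    using that no_edge AV DV simple_graphD(2)[OF G] unfolding nbhd_def by blast
  ultimately show ?thesis using assms(2,3) unfolding nbhd_Un dissociation_set_def by auto
qed

lemma dissociation_set_nbr_unique:
  assumes "finite V" "dissociation_set V E F"
    and "x \<in> F" "a \<in> F" "b \<in> F" "E x a" "E x b"
  shows "a = b"
proof -
  have "finite (nbhd F E x)"
    using assms finite_subset unfolding dissociation_set_def nbhd_def by fastforce
  moreover have "card (nbhd F E x) \<le> Suc 0" using assms unfolding dissociation_set_def by auto
  ultimately show "a = b" using assms card_le_Suc0_iff_eq unfolding nbhd_def by fastforce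
qed

lemma maximal_dissociation_set_Diff:
  assumes G: "simple_graph V E" and M: "maximal_dissociation_set V E F"
    and DF: "D \<subseteq> F" and W: "W \<subseteq> V - (\<Union>d\<in>D. cnbhd V E d)" and FW: "F - D \<subseteq> W"
  shows "maximal_dissociation_set W E (F - D)"
proof -
  have fin: "finite V" using simple_graphD(1)[OF G] .
  have dF: "dissociation_set V E F" using M unfolding maximal_dissociation_set_def by auto
  have dD: "dissociation_set V E D" using dissociation_set_subset[OF fin dF DF] .
  have "dissociation_set W E (F - D)"
    using dissociation_set_subset[OF fin dF, of "F - D"] FW unfolding dissociation_set_def by auto
  moreover have "F' = F - D" if F': "dissociation_set W E F'" "F - D \<subseteq> F'" for F'
  proof -
    have F'W: "F' \<subseteq> W" using F' unfolding dissociation_set_def by auto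
    have "\<forall>x\<in>F'. \<forall>d\<in>D. \<not> E x d"
      using F'W W DF dF simple_graphD(2)[OF G]
      unfolding cnbhd_def nbhd_def dissociation_set_def by blast
    moreover have "dissociation_set V E F'" using F' F'W W unfolding dissociation_set_def by auto
    ultimately have "dissociation_set V E (F' \<union> D)" using dissociation_set_Un[OF G _ dD] by blast
    moreover have "F \<subseteq> F' \<union> D" using F' by auto
    ultimately have "F' \<union> D = F" using M unfolding maximal_dissociation_set_def by blast
    thus ?thesis using F'W W DF unfolding cnbhd_def by auto
  qed
  ultimately show ?thesis unfolding maximal_dissociation_set_def by auto
qed

lemma maximal_dissociation_set_remove_edge:
  assumes G: "simple_graph V E" and M: "maximal_dissociation_set V E F"
    and "a \<in> F" "b \<in> F" "E a b"
  shows "maximal_dissociation_set (V - (cnbhd V E a \<union> cnbhd V E b)) E (F - {a, b})"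
proof (rule maximal_dissociation_set_Diff[OF G M])
  have fin: "finite V" using simple_graphD(1)[OF G] .
  have dF: "dissociation_set V E F" and FV: "F \<subseteq> V"
    using M unfolding maximal_dissociation_set_def dissociation_set_def by auto
  have "E b a" using simple_graphD(2)[OF G] assms(3-5) FV by auto
  hence "\<not> E a x \<and> \<not> E b x" if "x \<in> F - {a, b}" for x
    using that assms(3-5) dissociation_set_nbr_unique[OF fin dF] by blast
  thus "F - {a, b} \<subseteq> V - (cnbhd V E a \<union> cnbhd V E b)"
    using FV unfolding cnbhd_def nbhd_def by auto
qed (use assms in auto)

lemma maximal_dissociation_set_remove_isolated:
  assumes G: "simple_graph V E" and M: "maximal_dissociation_set V E F"
    and "a \<in> F" "\<forall>x\<in>F. \<not> E a x"
  shows "maximal_dissociation_set (V - cnbhd V E a) E (F - {a})"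
proof (rule maximal_dissociation_set_Diff[OF G M])
  show "F - {a} \<subseteq> V - cnbhd V E a"
    using assms unfolding maximal_dissociation_set_def dissociation_set_def cnbhd_def nbhd_def
    by auto
qed (use assms in auto)

lemma card_le_phi_Diff:
  assumes "finite W" and X: "\<And>F. F \<in> X \<Longrightarrow> D \<subseteq> F \<and> maximal_dissociation_set W E (F - D)"
  shows "card X \<le> phi W E"
  unfolding phi_def
proof (rule card_inj_on_le)
  show "inj_on (\<lambda>F. F - D) X" by (rule inj_onI) (metis Diff_partition X)
  show "(\<lambda>F. F - D) ` X \<subseteq> {F. maximal_dissociation_set W E F}" using X by auto
  show "finite {F. maximal_dissociation_set W E F}"
    using finite_maximal_dissociation_sets[OF assms(1)] .
qed

locale graph_leaf =
  fixes V :: "'a set" and E :: "'a \<Rightarrow> 'a \<Rightarrow> bool" and v w :: 'a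
  assumes simple: "simple_graph V E" and leaf: "v \<in> V" and nbhd_leaf: "nbhd V E v = {w}"
begin

lemma leaf_nbr_in_V: "w \<in> V" and leaf_edge: "E v w" "E w v"
  and leaf_nbr_unique: "x \<in> V \<Longrightarrow> E v x \<Longrightarrow> x = w"
  using nbhd_leaf simple_graphD(2)[OF simple] leaf unfolding nbhd_def by auto

lemma cnbhd_leaf: "cnbhd V E v = {v, w}"
  using nbhd_leaf unfolding cnbhd_def by auto

lemma leaf_cnbhd_subset: "cnbhd V E v \<subseteq> cnbhd V E w"
  using cnbhd_leaf leaf leaf_edge unfolding cnbhd_def nbhd_def by auto

lemma maximal_without_leaf:
  assumes M: "maximal_dissociation_set V E F" and "v \<notin> F"
  shows "w \<in> F \<and> (\<exists>u\<in>F. E w u)"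
proof (rule ccontr)
  assume contra: "\<not> (w \<in> F \<and> (\<exists>u\<in>F. E w u))"
  have fin: "finite V" using simple_graphD(1)[OF simple] .
  have dF: "dissociation_set V E F" and FV: "F \<subseteq> V"
    using M unfolding maximal_dissociation_set_def dissociation_set_def by auto
  define D where "D = insert v (F \<inter> {w})"
  have "dissociation_set V E D"
    by (rule dissociation_set_subset[OF fin dissociation_set_pair[OF simple leaf leaf_nbr_in_V]])
      (auto simp: D_def)
  moreover have "\<forall>x\<in>F - {w}. \<forall>d\<in>D. \<not> E x d"
  proof (intro ballI)
    fix x d assume x: "x \<in> F - {w}" and d: "d \<in> D"
    have xV: "x \<in> V" using x FV by auto
    have "\<not> E x v" using x leaf_nbr_unique[OF xV] simple_graphD(2)[OF simple xV leaf] by auto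
    moreover have "\<not> E x w" if "w \<in> F"
      using x that contra simple_graphD(2)[OF simple xV leaf_nbr_in_V] by auto
    ultimately show "\<not> E x d" using d unfolding D_def by auto
  qed
  ultimately have "dissociation_set V E ((F - {w}) \<union> D)"
    by (intro dissociation_set_Un[OF simple dissociation_set_subset[OF fin dF]]) auto
  moreover have "F \<subseteq> (F - {w}) \<union> D" unfolding D_def by auto
  ultimately have "(F - {w}) \<union> D = F" using M unfolding maximal_dissociation_set_def by blast
  thus False using \<open>v \<notin> F\<close> unfolding D_def by auto
qed

lemma maximal_dissociation_set_leaf_cases:
  assumes M: "maximal_dissociation_set V E F"
  shows "(\<exists>u\<in>nbhd V E w - {v}. v \<notin> F \<and> w \<in> F \<and> u \<in> F)
    \<or> (v \<in> F \<and> w \<in> F) \<or> (v \<in> F \<and> w \<notin> F)"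
proof (cases "v \<in> F")
  case False
  then obtain u where "w \<in> F" "u \<in> F" "E w u" using maximal_without_leaf[OF M] by blast
  moreover have "u \<in> V"
    using M \<open>u \<in> F\<close> unfolding maximal_dissociation_set_def dissociation_set_def by auto
  ultimately show ?thesis using False unfolding nbhd_def by auto
qed auto

lemma card_without_leaf:
  assumes u: "u \<in> nbhd V E w - {v}"
  shows "card {F. maximal_dissociation_set V E F \<and> v \<notin> F \<and> w \<in> F \<and> u \<in> F}
           \<le> phi (V - (cnbhd V E w \<union> cnbhd V E u)) E"
proof (rule card_le_phi_Diff)
  show "finite (V - (cnbhd V E w \<union> cnbhd V E u))" using simple_graphD(1)[OF simple] by auto
  have "E w u" using u unfolding nbhd_def by auto
  thus "{w, u} \<subseteq> F \<and> maximal_dissociation_set (V - (cnbhd V E w \<union> cnbhd V E u)) E (F - {w, u})"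
    if "F \<in> {F. maximal_dissociation_set V E F \<and> v \<notin> F \<and> w \<in> F \<and> u \<in> F}" for F
    using that maximal_dissociation_set_remove_edge[OF simple] by auto
qed

lemma card_with_leaf_and_nbr:
  "card {F. maximal_dissociation_set V E F \<and> v \<in> F \<and> w \<in> F} \<le> phi (V - cnbhd V E w) E"
proof (rule card_le_phi_Diff)
  show "finite (V - cnbhd V E w)" using simple_graphD(1)[OF simple] by auto
  have "V - (cnbhd V E v \<union> cnbhd V E w) = V - cnbhd V E w" using leaf_cnbhd_subset by auto
  thus "{v, w} \<subseteq> F \<and> maximal_dissociation_set (V - cnbhd V E w) E (F - {v, w})"
    if "F \<in> {F. maximal_dissociation_set V E F \<and> v \<in> F \<and> w \<in> F}" for F
    using that maximal_dissociation_set_remove_edge[OF simple _ _ _ leaf_edge(1)] by auto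
qed

lemma card_with_leaf_only:
  "card {F. maximal_dissociation_set V E F \<and> v \<in> F \<and> w \<notin> F} \<le> phi (V - {v, w}) E"
proof (rule card_le_phi_Diff)
  show "finite (V - {v, w})" using simple_graphD(1)[OF simple] by auto
  show "{v} \<subseteq> F \<and> maximal_dissociation_set (V - {v, w}) E (F - {v})"
    if "F \<in> {F. maximal_dissociation_set V E F \<and> v \<in> F \<and> w \<notin> F}" for F
  proof -
    have isolated: "\<forall>x\<in>F. \<not> E v x"
      using that leaf_nbr_unique unfolding maximal_dissociation_set_def dissociation_set_def
      by blast
    show ?thesis
      using maximal_dissociation_set_remove_isolated[OF simple _ _ isolated] that
      by (auto simp: cnbhd_leaf)
  qed
qed

end

theorem lemma2p3:
  fixes V :: "'a set" and E :: "'a \<Rightarrow> 'a \<Rightarrow> bool" and v w :: 'a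
  assumes "simple_graph V E"
    and "v \<in> V"
    and "nbhd V E v = {w}"
  shows "phi V E \<le>
           (\<Sum>u \<in> nbhd V E w - {v}. phi (V - (cnbhd V E w \<union> cnbhd V E u)) E)
           + phi (V - {v, w}) E
           + phi (V - cnbhd V E w) E"
proof -
  interpret graph_leaf V E v w using assms by unfold_locales
  define A where "A u = {F. maximal_dissociation_set V E F \<and> v \<notin> F \<and> w \<in> F \<and> u \<in> F}" for u
  define B where "B = {F. maximal_dissociation_set V E F \<and> v \<in> F \<and> w \<in> F}"
  define C where "C = {F. maximal_dissociation_set V E F \<and> v \<in> F \<and> w \<notin> F}"
  have "{F. maximal_dissociation_set V E F} = (\<Union>u\<in>nbhd V E w - {v}. A u) \<union> C \<union> B"
    using maximal_dissociation_set_leaf_cases by (auto simp: A_def B_def C_def)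
  hence "phi V E = card ((\<Union>u\<in>nbhd V E w - {v}. A u) \<union> C \<union> B)"
    unfolding phi_def by simp
  also have "\<dots> \<le> card (\<Union>u\<in>nbhd V E w - {v}. A u) + card C + card B"
    by (meson add_right_mono card_Un_le le_trans)
  also have "card (\<Union>u\<in>nbhd V E w - {v}. A u) \<le> (\<Sum>u\<in>nbhd V E w - {v}. card (A u))"
    using simple_graphD(1)[OF assms(1)] by (intro card_UN_le) (auto simp: nbhd_def)
  also have "\<dots> \<le> (\<Sum>u\<in>nbhd V E w - {v}. phi (V - (cnbhd V E w \<union> cnbhd V E u)) E)"
    unfolding A_def by (intro sum_mono card_without_leaf)
  finally show ?thesis using card_with_leaf_only card_with_leaf_and_nbr
    unfolding B_def C_def by linarith
qed

end
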